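(* Let $1\le d<n$, let $I_1\subseteq I(d,n)$ be the set of rows containing $n$, and let $\underline j:=(n-d)(n-d+1)\cdots(n-2)\,n$. (i) $\underline j$ is the minimal element of $\mathfrak C_{\mathrm{left}}\cap I_1$. (ii) If $\underline i\in I(d,n)$ satisfies $\ell(\underline i)\ge\ell(\underline j)$, then $\underline i\in I_1$.
   Context: $I(d,n)$: $d$-subsets of $\{1,\dots,n\}$ as increasing sequences $i_1\cdots i_d$, ordered by $\underline i\le\underline j$ iff $i_k\le j_k$ for all $k$; $\ell(\underline i)=\sum_h(i_h-h)$. $\mathfrak C_{\mathrm{left}}$ is the maximal chain largest in the lexicographic order of concatenated strings $\underline i_r\cdots\underline i_0$; explicitly it is obtained from $(n-d+1)\cdots n$ by lowering successively the first, second, ..., $d$-th entries by one, then again the first, second, ..., and so on until reaching $12\cdots d$. *)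

theory Defs
  imports Main
begin

text \<open>Elements of I(d,n): strictly increasing lists of length d with entries in {1..n}.
  The h-th entry (1-indexed) i_h is stored at list position h-1.\<close>
definition Idn :: "nat \<Rightarrow> nat \<Rightarrow> nat list set" where
  "Idn d n = {xs. length xs = d \<and> sorted_wrt (<) xs \<and> set xs \<subseteq> {1..n}}"

definition leqI :: "nat list \<Rightarrow> nat list \<Rightarrow> bool" where
  "leqI xs ys \<longleftrightarrow> length xs = length ys \<and> (\<forall>k<length xs. xs ! k \<le> ys ! k)"

definition ell :: "nat list \<Rightarrow> nat" where
  "ell xs = (\<Sum>h<length xs. xs ! h - (h + 1))"

definition lower_at :: "nat \<Rightarrow> nat list \<Rightarrow> nat list" where
  "lower_at k xs = xs[k := xs ! k - 1]"

fun cleft_elem :: "nat \<Rightarrow> nat \<Rightarrow> nat \<Rightarrow> nat list" where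
  "cleft_elem d n 0 = [n - d + 1..<n + 1]"
| "cleft_elem d n (Suc t) = lower_at (t mod d) (cleft_elem d n t)"

text \<open>C_left: the chain from (n-d+1)...n down to 12...d, which has d(n-d) steps.\<close>
definition Cleft :: "nat \<Rightarrow> nat \<Rightarrow> nat list set" where
  "Cleft d n = {cleft_elem d n t | t. t \<le> d * (n - d)}"

definition I1 :: "nat \<Rightarrow> nat \<Rightarrow> nat list set" where
  "I1 d n = {xs \<in> Idn d n. n \<in> set xs}"

definition jrow :: "nat \<Rightarrow> nat \<Rightarrow> nat list" where
  "jrow d n = [n - d..<n - 1] @ [n]"

end

theory Submission
  imports Defs
begin

text \<open>Every step of \<open>\<frakC>\<^sub>l\<^sub>e\<^sub>f\<^sub>t\<close> lowers one entry, so the chain decreases componentwise.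
  Its first round of \<open>d\<close> steps lowers each entry once, the last entry \<open>n\<close> at step \<open>d\<close>;
  hence the elements of the chain containing \<open>n\<close> are those before step \<open>d\<close>, and the
  smallest of them, reached at step \<open>d - 1\<close>, is \<open>j\<close>. For (ii), a row avoiding \<open>n\<close> lies in
  \<open>I(d, n - 1)\<close>, where \<open>\<ell>\<close> is at most \<open>d (n - 1 - d) = \<ell>(j) - 1\<close>.\<close>

lemma length_cleft_elem: "d \<le> n \<Longrightarrow> length (cleft_elem d n t) = d"
  by (induction t) (simp_all add: lower_at_def del: upt_Suc)

lemma leqI_refl: "leqI xs xs"
  by (simp add: leqI_def)

lemma leqI_trans: "leqI xs ys \<Longrightarrow> leqI ys zs \<Longrightarrow> leqI xs zs"
  unfolding leqI_def by (metis order_trans)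

lemma leqI_lower_at: "leqI (lower_at k xs) xs"
  unfolding leqI_def lower_at_def
  by (cases "k < length xs") (auto simp: nth_list_update)

lemma leqI_cleft_elem_antimono:
  assumes "s \<le> t"
  shows "leqI (cleft_elem d n t) (cleft_elem d n s)"
  using assms
proof (induction t rule: dec_induct)
  case base
  show ?case by (rule leqI_refl)
next
  case (step t)
  show ?case
    using leqI_trans[OF leqI_lower_at step.IH] by simp
qed

lemma cleft_elem_first_round:
  assumes "d \<le> n" "t \<le> d"
  shows "cleft_elem d n t = map (\<lambda>k. n - d + k + (if k < t then 0 else 1)) [0..<d]"
  using assms(2)
proof (induction t)
  case 0
  have "map (\<lambda>k. k + (n - d + 1)) [0..<d] = [n - d + 1..<d + (n - d + 1)]"
    by (rule map_add_upt)
  with assms(1) show ?case by (simp add: add.commute del: upt_Suc)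
next
  case (Suc t)
  then have "t mod d = t" by simp
  with Suc show ?case
    by (auto simp: lower_at_def nth_list_update intro!: nth_equalityI)
qed

lemma jrow_eq_cleft_elem:
  assumes "1 \<le> d" "d < n"
  shows "jrow d n = cleft_elem d n (d - 1)"
  using assms
  by (auto simp: jrow_def cleft_elem_first_round nth_append intro!: nth_equalityI simp del: upt_Suc)

lemma n_notin_cleft_elem:
  assumes "d \<le> n" "d \<le> t"
  shows "n \<notin> set (cleft_elem d n t)"
proof
  assume "n \<in> set (cleft_elem d n t)"
  then obtain k where k: "k < d" and "cleft_elem d n t ! k = n"
    using assms by (auto simp: in_set_conv_nth length_cleft_elem)
  moreover have "cleft_elem d n t ! k \<le> cleft_elem d n d ! k"
    using leqI_cleft_elem_antimono[OF assms(2), of d n] k assms(1)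
    unfolding leqI_def by (simp add: length_cleft_elem)
  ultimately show False
    using assms(1) by (simp add: cleft_elem_first_round)
qed

lemma jrow_in_Idn: "1 \<le> d \<Longrightarrow> d < n \<Longrightarrow> jrow d n \<in> Idn d n"
  by (auto simp: Idn_def jrow_def sorted_wrt_append simp del: upt_Suc)

lemma sorted_wrt_less_nth_add_diff_le:
  fixes xs :: "nat list"
  assumes "sorted_wrt (<) xs" "j < length xs" "h \<le> j"
  shows "xs ! h + (j - h) \<le> xs ! j"
  using assms(3,2)
proof (induction j rule: dec_induct)
  case base
  show ?case by simp
next
  case (step j)
  have "xs ! j < xs ! Suc j"
    using assms(1) step.prems sorted_wrt_nth_less by blast
  with step show ?case by simp
qed

lemma ell_le_Idn:
  assumes "xs \<in> Idn d n"
  shows "ell xs \<le> d * (n - d)"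
proof -
  have len: "length xs = d" and sorted: "sorted_wrt (<) xs" and bounds: "set xs \<subseteq> {1..n}"
    using assms by (auto simp: Idn_def)
  have "xs ! h - (h + 1) \<le> n - d" if h: "h < d" for h
  proof -
    have "xs ! h + (d - 1 - h) \<le> xs ! (d - 1)"
      using sorted_wrt_less_nth_add_diff_le[OF sorted, of "d - 1" h] h len by simp
    moreover have "xs ! (d - 1) \<le> n"
      using bounds h len nth_mem[of "d - 1" xs] by fastforce
    ultimately show ?thesis by linarith
  qed
  then have "ell xs \<le> (\<Sum>h<d. n - d)"
    unfolding ell_def len by (intro sum_mono) simp
  then show ?thesis by simp
qed

lemma Idn_pred:
  assumes "xs \<in> Idn d n" "n \<notin> set xs"
  shows "xs \<in> Idn d (n - 1)"
proof -
  have "set xs \<subseteq> {1..n} - {n}"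
    using assms by (auto simp: Idn_def)
  also have "\<dots> \<subseteq> {1..n - 1}"
    by auto
  finally show ?thesis
    using assms(1) by (simp add: Idn_def)
qed

lemma ell_upt: "ell [a..<a + m] = m * (a - 1)"
  by (simp add: ell_def)

lemma ell_snoc: "ell (xs @ [x]) = ell xs + (x - Suc (length xs))"
  by (simp add: ell_def nth_append)

lemma ell_jrow:
  assumes "1 \<le> d" "d < n"
  shows "ell (jrow d n) = d * (n - d - 1) + 1"
proof -
  have "jrow d n = [n - d..<n - d + (d - 1)] @ [n]"
    using assms by (simp add: jrow_def)
  then have "ell (jrow d n) = (d - 1) * (n - d - 1) + (n - d)"
    using assms by (simp only: ell_snoc ell_upt length_upt) simp
  also have "\<dots> = d * (n - d - 1) + 1"
  proof -
    obtain m where "n - d = Suc m"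
      using assms by (metis Suc_diff_Suc)
    then show ?thesis
      using assms by (cases d) simp_all
  qed
  finally show ?thesis .
qed

lemma jrow_in_Cleft:
  assumes "1 \<le> d" "d < n"
  shows "jrow d n \<in> Cleft d n"
proof -
  have "d * 1 \<le> d * (n - d)"
    using assms(2) by (intro mult_le_mono2) simp
  then have "d - 1 \<le> d * (n - d)"
    by linarith
  then show ?thesis
    unfolding Cleft_def jrow_eq_cleft_elem[OF assms] by (auto intro!: exI[of _ "d - 1"])
qed

lemma jrow_in_I1: "1 \<le> d \<Longrightarrow> d < n \<Longrightarrow> jrow d n \<in> I1 d n"
  using jrow_in_Idn by (simp add: I1_def jrow_def)

lemma leqI_jrow_if_in_Cleft_I1:
  assumes "1 \<le> d" "d < n" "x \<in> Cleft d n \<inter> I1 d n"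
  shows "leqI (jrow d n) x"
proof -
  obtain t where x: "x = cleft_elem d n t" and "n \<in> set x"
    using assms(3) by (auto simp: Cleft_def I1_def)
  then have "t \<le> d - 1"
    using n_notin_cleft_elem[of d n t] assms(2) by fastforce
  then show ?thesis
    unfolding x jrow_eq_cleft_elem[OF assms(1,2)] by (rule leqI_cleft_elem_antimono)
qed

lemma in_I1_if_ell_jrow_le:
  assumes "1 \<le> d" "d < n" "i \<in> Idn d n" "ell (jrow d n) \<le> ell i"
  shows "i \<in> I1 d n"
proof (rule ccontr)
  assume "i \<notin> I1 d n"
  with assms(3) have "i \<in> Idn d (n - 1)"
    by (intro Idn_pred) (auto simp: I1_def)
  then have "ell i \<le> d * (n - d - 1)"
    using ell_le_Idn by fastforce
  with assms(4) show False
    using ell_jrow[OF assms(1,2)] by simp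
qed

theorem lemma2p28:
  fixes d n :: nat
  assumes "1 \<le> d" and "d < n"
  shows "(jrow d n \<in> Cleft d n \<inter> I1 d n \<and>
          (\<forall>x \<in> Cleft d n \<inter> I1 d n. leqI (jrow d n) x))
       \<and> (\<forall>i \<in> Idn d n. ell (jrow d n) \<le> ell i \<longrightarrow> i \<in> I1 d n)"
  using assms jrow_in_Cleft jrow_in_I1 leqI_jrow_if_in_Cleft_I1 in_I1_if_ell_jrow_le
  by blast

end
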